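(* For every integer $l\geq 0$, with $m=2^l$ and $n=4m+1$, the oriented graph $T_l$ is $n$-nice.
   Context: For $l\ge0$, let $m=2^l$, $n=4m+1$. The oriented graph $T_l$ has vertex set $\{x_i : i\in\mathbb{Z}/n\mathbb{Z}\}$ (the vertex $x_i$ being identified with the $m$-tuple $(i,i+1,\dots,i+m-1)$ of elements of $\mathbb{Z}/n\mathbb{Z}$), and arcs $x_ix_{i+m}$ and $x_ix_{i+m+1}$ for every $i$ (indices mod $n$). For a vertex $x$ let $N^+(x)$ (resp. $N^-(x)$) be its set of out-neighbors (resp. in-neighbors), and for a set $S$ let $N^{\pm}(S)=\bigcup_{x\in S}N^{\pm}(x)$. For $\alpha=(\alpha_1,\dots,\alpha_k)\in\{+,-\}^k$ define $N^\alpha(x)=N^{\alpha_1}(x)$ if $k=1$ and $N^{\alpha}(x)=N^{\alpha_1}(N^{(\alpha_2,\dots,\alpha_k)}(x))$ if $k\ge2$. An oriented graph $G$ is $k$-nice if $N^\alpha(x)=V(G)$ for every $\alpha\in\{+,-\}^k$ and every $x\in V(G)$. *)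

theory Defs
  imports Main
begin

datatype sign = Plus | Minus

definition out_nbrs :: "'a set \<Rightarrow> ('a \<Rightarrow> 'a \<Rightarrow> bool) \<Rightarrow> 'a \<Rightarrow> 'a set" where
  "out_nbrs V A x = {y \<in> V. A x y}"

definition in_nbrs :: "'a set \<Rightarrow> ('a \<Rightarrow> 'a \<Rightarrow> bool) \<Rightarrow> 'a \<Rightarrow> 'a set" where
  "in_nbrs V A x = {y \<in> V. A y x}"

definition nbr :: "'a set \<Rightarrow> ('a \<Rightarrow> 'a \<Rightarrow> bool) \<Rightarrow> sign \<Rightarrow> 'a \<Rightarrow> 'a set" where
  "nbr V A s x = (case s of Plus \<Rightarrow> out_nbrs V A x | Minus \<Rightarrow> in_nbrs V A x)"

definition nbr_set :: "'a set \<Rightarrow> ('a \<Rightarrow> 'a \<Rightarrow> bool) \<Rightarrow> sign \<Rightarrow> 'a set \<Rightarrow> 'a set" where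
  "nbr_set V A s S = (\<Union>x\<in>S. nbr V A s x)"

text \<open>N^(a1,...,ak)(S) = N^a1(N^(a2,...,ak)(S)); N^alpha(x) = nbr_seq V A alpha {x} for alpha nonempty.\<close>
fun nbr_seq :: "'a set \<Rightarrow> ('a \<Rightarrow> 'a \<Rightarrow> bool) \<Rightarrow> sign list \<Rightarrow> 'a set \<Rightarrow> 'a set" where
  "nbr_seq V A [] S = S"
| "nbr_seq V A (s # ss) S = nbr_set V A s (nbr_seq V A ss S)"

definition nice :: "'a set \<Rightarrow> ('a \<Rightarrow> 'a \<Rightarrow> bool) \<Rightarrow> nat \<Rightarrow> bool" where
  "nice V A k \<longleftrightarrow> (\<forall>alpha. length alpha = k \<longrightarrow> (\<forall>x\<in>V. nbr_seq V A alpha {x} = V))"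

text \<open>T_l: vertices x_i, i in Z/nZ represented by {0..<n}; arcs x_i x_(i+m), x_i x_(i+m+1) mod n.\<close>
definition T_verts :: "nat \<Rightarrow> nat set" where
  "T_verts l = {0..<4 * 2^l + 1}"

definition T_arc :: "nat \<Rightarrow> nat \<Rightarrow> nat \<Rightarrow> bool" where
  "T_arc l i j \<longleftrightarrow> (let m = 2^l; n = 4 * m + 1 in
     i < n \<and> j < n \<and> (j = (i + m) mod n \<or> j = (i + m + 1) mod n))"

end

theory Submission
  imports Defs
begin

text \<open>
  The out-neighbourhood of a cyclic interval \<open>[a, b]\<close> is the cyclic interval
  \<open>[a + m, b + m + 1]\<close> and its in-neighbourhood is \<open>[a - m - 1, b - m]\<close>; either way the
  interval becomes one longer. Starting from a single vertex, after \<open>k\<close> steps of any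
  signs one has an interval of \<open>k + 1\<close> consecutive residues, which is all of \<open>\<int>/n\<close>
  as soon as \<open>k \<ge> n - 1\<close>.
\<close>

definition wrap :: "nat \<Rightarrow> int \<Rightarrow> nat" where
  "wrap n x = nat (x mod int n)"

definition circ_arc :: "nat \<Rightarrow> int \<Rightarrow> nat \<Rightarrow> nat \<Rightarrow> bool" where
  "circ_arc n m i j \<longleftrightarrow> i < n \<and> (j = wrap n (int i + m) \<or> j = wrap n (int i + m + 1))"

lemma wrap_less: "n > 0 \<Longrightarrow> wrap n x < n"
  by (simp add: wrap_def nat_less_iff)

lemma wrap_of_nat: "wrap n (int k) = k mod n"
  by (simp add: wrap_def flip: of_nat_mod)

lemma wrap_eq_wrap_iff: "n > 0 \<Longrightarrow> wrap n x = wrap n y \<longleftrightarrow> x mod int n = y mod int n"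
  by (simp add: wrap_def eq_nat_nat_iff)

lemma wrap_eq_iff: "n > 0 \<Longrightarrow> i = wrap n x \<longleftrightarrow> int i = x mod int n"
  by (auto simp: wrap_def nat_eq_iff)

lemma wrap_image_interval_eq_all:
  assumes "n > 0" and "b - a \<ge> int n - 1"
  shows "wrap n ` {a..b} = {0..<n}"
proof
  show "wrap n ` {a..b} \<subseteq> {0..<n}"
    using wrap_less[OF \<open>n > 0\<close>] by auto
  show "{0..<n} \<subseteq> wrap n ` {a..b}"
  proof
    fix y assume "y \<in> {0..<n}"
    define c where "c = a + (int y - a) mod int n"
    have "0 \<le> (int y - a) mod int n" "(int y - a) mod int n < int n"
      using \<open>n > 0\<close> by simp_all
    then have "c \<in> {a..b}"
      unfolding c_def atLeastAtMost_iff using assms(2) by linarith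
    moreover have "wrap n c = y"
      using \<open>y \<in> {0..<n}\<close> by (simp add: c_def wrap_def mod_add_right_eq zmod_int)
    ultimately show "y \<in> wrap n ` {a..b}" by blast
  qed
qed

lemma out_nbrs_circ_arc:
  assumes "n > 0"
  shows "out_nbrs {0..<n} (circ_arc n m) (wrap n x) = {wrap n (x + m), wrap n (x + m + 1)}"
proof -
  have "wrap n (int (wrap n x) + c) = wrap n (x + c)" for c
    using assms by (simp add: wrap_def mod_add_left_eq)
  then show ?thesis
    using assms by (auto simp: out_nbrs_def circ_arc_def wrap_less add.assoc)
qed

lemma in_nbrs_circ_arc:
  assumes "n > 0"
  shows "in_nbrs {0..<n} (circ_arc n m) (wrap n x) = {wrap n (x - m - 1), wrap n (x - m)}"
proof -
  have "wrap n x = wrap n (int i + c) \<longleftrightarrow> i = wrap n (x - c)" if "i < n" for i c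
  proof -
    have "i = wrap n (x - c) \<longleftrightarrow> int i mod int n = (x - c) mod int n"
      using that assms by (simp add: wrap_eq_iff zmod_int)
    then show ?thesis
      using assms by (simp add: wrap_eq_wrap_iff mod_eq_dvd_iff dvd_diff_commute algebra_simps)
  qed
  from this[of _ m] this[of _ "m + 1"] show ?thesis
    using assms by (auto simp: in_nbrs_def circ_arc_def wrap_less add.assoc diff_diff_eq)
qed

lemma UN_atLeastAtMost_int_pair:
  fixes a b d :: int
  assumes "a \<le> b"
  shows "(\<Union>c\<in>{a..b}. {c + d, c + d + 1}) = {a + d..b + d + 1}"
proof
  show "{a + d..b + d + 1} \<subseteq> (\<Union>c\<in>{a..b}. {c + d, c + d + 1})"
  proof
    fix y assume y: "y \<in> {a + d..b + d + 1}"
    show "y \<in> (\<Union>c\<in>{a..b}. {c + d, c + d + 1})"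
    proof (cases "y \<le> b + d")
      case True
      with y show ?thesis by (intro UN_I[of "y - d"]) auto
    next
      case False
      with y assms show ?thesis by (intro UN_I[of b]) auto
    qed
  qed
qed auto

lemma nbr_set_Plus_circ_arc_interval:
  assumes "n > 0" "a \<le> b"
  shows "nbr_set {0..<n} (circ_arc n m) Plus (wrap n ` {a..b}) = wrap n ` {a + m..b + m + 1}"
proof -
  have "nbr_set {0..<n} (circ_arc n m) Plus (wrap n ` {a..b})
      = (\<Union>c\<in>{a..b}. wrap n ` {c + m, c + m + 1})"
    using assms(1) by (simp add: nbr_set_def nbr_def out_nbrs_circ_arc)
  also have "\<dots> = wrap n ` {a + m..b + m + 1}"
    by (simp only: image_UN[symmetric] UN_atLeastAtMost_int_pair[OF assms(2)])
  finally show ?thesis .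
qed

lemma nbr_set_Minus_circ_arc_interval:
  assumes "n > 0" "a \<le> b"
  shows "nbr_set {0..<n} (circ_arc n m) Minus (wrap n ` {a..b}) = wrap n ` {a - m - 1..b - m}"
proof -
  have shift: "(\<Union>c\<in>{a..b}. {c - m - 1, c - m}) = {a - m - 1..b - m}"
    using UN_atLeastAtMost_int_pair[OF assms(2), of "- m - 1"] by (simp add: algebra_simps)
  have "nbr_set {0..<n} (circ_arc n m) Minus (wrap n ` {a..b})
      = (\<Union>c\<in>{a..b}. wrap n ` {c - m - 1, c - m})"
    using assms(1) by (simp add: nbr_set_def nbr_def in_nbrs_circ_arc)
  also have "\<dots> = wrap n ` {a - m - 1..b - m}"
    by (simp only: image_UN[symmetric] shift)
  finally show ?thesis .
qed

lemma nbr_seq_circ_arc_interval: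
  assumes "n > 0" "a \<le> b"
  shows "\<exists>a' b'. b' - a' = b - a + int (length alpha) \<and>
    nbr_seq {0..<n} (circ_arc n m) alpha (wrap n ` {a..b}) = wrap n ` {a'..b'}"
proof (induction alpha)
  case Nil
  show ?case by auto
next
  case (Cons s alpha)
  then obtain a' b' where len: "b' - a' = b - a + int (length alpha)"
    and seq: "nbr_seq {0..<n} (circ_arc n m) alpha (wrap n ` {a..b}) = wrap n ` {a'..b'}"
    by blast
  have "a' \<le> b'" using len assms(2) by simp
  show ?case
  proof (cases s)
    case Plus
    then show ?thesis
      using nbr_set_Plus_circ_arc_interval[OF assms(1) \<open>a' \<le> b'\<close>] len seq
      by (intro exI[of _ "a' + m"] exI[of _ "b' + m + 1"]) simp
  next
    case Minus
    then show ?thesis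
      using nbr_set_Minus_circ_arc_interval[OF assms(1) \<open>a' \<le> b'\<close>] len seq
      by (intro exI[of _ "a' - m - 1"] exI[of _ "b' - m"]) simp
  qed
qed

theorem nice_circ_arc:
  assumes "n > 0" "k \<ge> n - 1"
  shows "nice {0..<n} (circ_arc n m) k"
  unfolding nice_def
proof (intro allI impI ballI)
  fix alpha :: "sign list" and x assume "length alpha = k" and "x \<in> {0..<n}"
  then have "{x} = wrap n ` {int x..int x}"
    by (simp add: wrap_of_nat)
  moreover obtain a' b' where "b' - a' = int k"
    and "nbr_seq {0..<n} (circ_arc n m) alpha (wrap n ` {int x..int x}) = wrap n ` {a'..b'}"
    using nbr_seq_circ_arc_interval[OF assms(1), of "int x" "int x" alpha m]
      \<open>length alpha = k\<close> by auto
  moreover have "wrap n ` {a'..b'} = {0..<n}"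
    using assms \<open>b' - a' = int k\<close> by (intro wrap_image_interval_eq_all) auto
  ultimately show "nbr_seq {0..<n} (circ_arc n m) alpha {x} = {0..<n}"
    by simp
qed

lemma T_arc_eq_circ_arc: "T_arc l = circ_arc (4 * 2^l + 1) (2^l)"
proof (intro ext)
  fix i j
  have "int i + 2^l = int (i + 2^l)" "int i + 2^l + 1 = int (i + 2^l + 1)"
    by simp_all
  then show "T_arc l i j = circ_arc (4 * 2^l + 1) (2^l) i j"
    unfolding T_arc_def circ_arc_def Let_def by (simp only: wrap_of_nat) auto
qed

theorem lemma11:
  fixes l :: nat
  shows "nice (T_verts l) (T_arc l) (4 * 2^l + 1)"
  unfolding T_verts_def T_arc_eq_circ_arc by (rule nice_circ_arc) simp_all

end
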